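(* Let $p$ be a prime, $d,t$ positive integers, $W=\mathbb{F}_p^d$, $U=\mathbb{F}_p^t$, and $V=\mathbb{F}_p^{d+t}=W\oplus U$. Let $g$ be a complete mapping of $U$ of cycle type $x_1^{k_1}\cdots x_{p^t}^{k_{p^t}}$, and for $\ell=1,\ldots,p^t$ enumerate its cycles of length $\ell$ as $\zeta_{\ell,i}=(u_{\ell,i,0},u_{\ell,i,1},\ldots,u_{\ell,i,\ell-1})$, $i=1,\ldots,k_\ell$ (so $g(u_{\ell,i,j})=u_{\ell,i,(j+1)\bmod \ell}$). For each such $\ell,i$ and $j=0,\ldots,\ell-1$ choose $M_{\ell,i,j}\in\operatorname{CGL}_d(p)$, and choose $w_{\ell,i}\in W$; put $\gamma_{\ell,i}=\operatorname{CT}(\lambda(M_{\ell,i,0}M_{\ell,i,1}\cdots M_{\ell,i,\ell-1},w_{\ell,i}))$. For $u=u_{\ell,i,j}$ define $\alpha_u:W\to W$, $w\mapsto wM_{\ell,i,j}$; $\omega_u=0$ if $j<\ell-1$ and $\omega_u=w_{\ell,i}$ if $j=\ell-1$; and $\nu_u=u_{\ell,i,(j+1)\bmod\ell}-u_{\ell,i,j}$. Then the $W$-coset-wise $\mathbb{F}_p$-affine function \[ f:V\to V,\quad w+u\mapsto \alpha_u(w)+u+\omega_u+\nu_u\quad(w\in W,u\in U) \] is a complete mapping of $V$ with cycle type $\prod_{\ell=1}^{p^t}\prod_{i=1}^{k_\ell}\operatorname{BU}_\ell(\gamma_{\ell,i})$.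
   Context: A complete mapping of an additive group $G$ is a permutation $h$ of $G$ such that $x\mapsto h(x)+x$ is also a permutation. Vectors are row vectors; for a $(d\times d)$-matrix $M$ over $\mathbb{F}_p$ and $v\in\mathbb{F}_p^d$, $\lambda(M,v)$ is the map $x\mapsto xM+v$ on $\mathbb{F}_p^d$. $\operatorname{CGL}_d(p)$ is the set of invertible $(d\times d)$-matrices over $\mathbb{F}_p$ not having $-1$ as an eigenvalue. The cycle type $\operatorname{CT}(\sigma)$ of a permutation $\sigma$ of a finite set $\Omega$ is the monomial $x_1^{k_1}\cdots x_{|\Omega|}^{k_{|\Omega|}}\in\mathbb{Q}[x_n:n\ge1]$ with $k_j$ the number of $j$-cycles. $\operatorname{BU}_\ell$ is the $\mathbb{Q}$-algebra endomorphism of $\mathbb{Q}[x_n:n\ge1]$ with $x_n\mapsto x_{\ell n}$. *)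

theory Defs
  imports "HOL-Analysis.Analysis" "HOL-Library.Multiset"
begin

definition complete_mapping :: "('g::ab_group_add \<Rightarrow> 'g) \<Rightarrow> bool" where
  "complete_mapping h \<longleftrightarrow> bij h \<and> bij (\<lambda>x. h x + x)"

text \<open>The affine map lambda(M,v): x maps to xM + v (row vectors).\<close>
definition aff_map :: "'a::comm_ring_1^'d^'d \<Rightarrow> 'a^'d \<Rightarrow> 'a^'d \<Rightarrow> 'a^'d" where
  "aff_map M v = (\<lambda>x. x v* M + v)"

definition CGL :: "('a::field^'d^'d) set" where
  "CGL = {M. invertible M \<and> \<not> (\<exists>v::'a^'d. v \<noteq> 0 \<and> v v* M = - v)}"

definition cyc :: "('b \<Rightarrow> 'b) \<Rightarrow> 'b \<Rightarrow> 'b set" where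
  "cyc \<sigma> x = range (\<lambda>n. (\<sigma> ^^ n) x)"

text \<open>Cycle type of a permutation of a finite type, encoded as the multiset of
  its cycle lengths: the monomial x_1^k_1 ... x_n^k_n corresponds to the multiset
  in which j has multiplicity k_j; products of monomials are multiset sums.\<close>
definition cycle_type :: "('b::finite \<Rightarrow> 'b) \<Rightarrow> nat multiset" where
  "cycle_type \<sigma> = image_mset card (mset_set {cyc \<sigma> x | x. True})"

definition BU :: "nat \<Rightarrow> nat multiset \<Rightarrow> nat multiset" where
  "BU l m = image_mset (\<lambda>n. l * n) m"

fun mat_chain :: "('u \<Rightarrow> 'u) \<Rightarrow> ('u \<Rightarrow> 'a::semiring_1^'d^'d) \<Rightarrow> 'u \<Rightarrow> nat \<Rightarrow> 'a^'d^'d" where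
  "mat_chain g M s 0 = mat 1"
| "mat_chain g M s (Suc n) = M s ** mat_chain g M (g s) n"

end

theory Submission
  imports Defs "HOL-Combinatorics.Cycles" "HOL-Combinatorics.Orbits"
begin

(* The map f sends (x, u) to (x M_u + omega_u, g u): it is a skew product over g whose fibre
   maps are affine.  If s is the base point of a g-cycle of length l, the orbit of (x, s) returns
   to the fibre over s after l steps and acts there by A_s = lambda(M_s M_(g s) ... M_(g^(l-1) s), w_s),
   as omega vanishes except at the last step.  So the f-period of (x, s) is l times the A_s-period
   of x.  Since f maps fibres bijectively along the g-cycle, every fibre over it contains as many
   points of a given f-period as the fibre over s, and counting points by period yields the
   contribution BU_l (CT A_s).
   Completeness: f (x, u) + (x, u) = (x (M_u + I) + omega_u, g u + u); the second component
   determines u because g is complete, and then x because -1 is not an eigenvalue of M_u. *)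

lemma bij_imp_permutation: "bij (\<sigma> :: 'a::finite \<Rightarrow> 'a) \<Longrightarrow> permutation \<sigma>"
  by (simp add: permutation)

lemma self_in_cyc: "x \<in> cyc \<sigma> x"
  unfolding cyc_def by (metis funpow_0 rangeI)

lemma funpow_in_cyc: "(\<sigma> ^^ n) x \<in> cyc \<sigma> x"
  unfolding cyc_def by simp

lemma card_cyc_pos: "0 < card (cyc (\<sigma> :: 'a::finite \<Rightarrow> 'a) x)"
  using self_in_cyc[of x \<sigma>] by (metis card_gt_0_iff empty_iff finite)

lemma cyc_eq_orbit: "permutation \<sigma> \<Longrightarrow> cyc \<sigma> x = orbit \<sigma> x"
  unfolding cyc_def by (auto simp: orbit_altdef_permutation)

lemma cyc_eq_if_mem: "permutation \<sigma> \<Longrightarrow> y \<in> cyc \<sigma> x \<Longrightarrow> cyc \<sigma> y = cyc \<sigma> x"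
  by (simp add: cyc_eq_orbit orbit_cyclic_eq3 cyclic_on_orbit')

lemma card_cyc: "permutation \<sigma> \<Longrightarrow> card (cyc \<sigma> x) = least_power \<sigma> x"
  using support_set[of \<sigma> x] cycle_of_permutation[of \<sigma> x] distinct_card
  unfolding cyc_def by fastforce

lemma least_power_eqI:
  assumes "permutation \<sigma>" and "\<And>n. (\<sigma> ^^ n) x = x \<longleftrightarrow> k dvd n"
  shows "least_power \<sigma> x = k"
  using assms least_power_dvd by (metis dvd_antisym dvd_refl)

lemma count_cycle_type_0: "count (cycle_type (\<sigma> :: 'a::finite \<Rightarrow> 'a)) 0 = 0"
proof -
  have "card (cyc \<sigma> x) \<noteq> 0" for x
    using card_cyc_pos[of \<sigma> x] by linarith
  then show ?thesis unfolding cycle_type_def by (auto simp: count_eq_zero_iff)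
qed

lemma count_cycle_type:
  fixes \<sigma> :: "'a::finite \<Rightarrow> 'a"
  assumes "permutation \<sigma>" and "0 < n"
  shows "n * count (cycle_type \<sigma>) n = card {x. card (cyc \<sigma> x) = n}"
proof -
  define C where "C = {c \<in> range (cyc \<sigma>). card c = n}"
  have "count (cycle_type \<sigma>) n = (\<Sum>c\<in>C. 1)"
    unfolding cycle_type_def count_image_mset' C_def
    by (intro sum.cong) (auto simp: count_mset_set')
  then have "n * count (cycle_type \<sigma>) n = (\<Sum>c\<in>C. card c)"
    by (simp add: C_def)
  also have "\<dots> = card (\<Union> C)"
  proof (rule card_Union_disjoint[symmetric])
    show "pairwise disjnt C"
    proof (rule pairwiseI)
      fix c c' assume "c \<in> C" "c' \<in> C" "c \<noteq> c'"
      then obtain x y where "c = cyc \<sigma> x" "c' = cyc \<sigma> y" unfolding C_def by blast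
      then show "disjnt c c'"
        using \<open>c \<noteq> c'\<close> cyc_eq_if_mem[OF assms(1)] by (metis disjnt_iff)
    qed
  qed simp
  also have "\<Union> C = {x. card (cyc \<sigma> x) = n}"
  proof (intro equalityI subsetI)
    fix x assume "x \<in> \<Union> C"
    then obtain y where "x \<in> cyc \<sigma> y" "card (cyc \<sigma> y) = n" unfolding C_def by blast
    then show "x \<in> {x. card (cyc \<sigma> x) = n}" using cyc_eq_if_mem[OF assms(1)] by simp
  next
    fix x assume "x \<in> {x. card (cyc \<sigma> x) = n}"
    then show "x \<in> \<Union> C" using self_in_cyc[of x \<sigma>] unfolding C_def by blast
  qed
  finally show ?thesis .
qed

lemma cycle_type_eqI:
  fixes \<sigma> :: "'a::finite \<Rightarrow> 'a"
  assumes "permutation \<sigma>" and "count X 0 = 0"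
    and "\<And>n. 0 < n \<Longrightarrow> n * count X n = card {x. card (cyc \<sigma> x) = n}"
  shows "cycle_type \<sigma> = X"
proof (rule multiset_eqI)
  fix n
  show "count (cycle_type \<sigma>) n = count X n"
  proof (cases "n = 0")
    case False
    then have "n * count (cycle_type \<sigma>) n = n * count X n"
      using assms count_cycle_type[OF assms(1)] by simp
    with False show ?thesis by simp
  qed (simp add: assms(2) count_cycle_type_0)
qed

lemma count_BU:
  assumes "0 < l"
  shows "count (BU l X) n = (if l dvd n then count X (n div l) else 0)"
  unfolding BU_def using assms
  by (induction X) (auto simp: dvd_def intro: exI[of _ "n div l"])

lemma count_BU_cycle_type:
  fixes \<sigma> :: "'a::finite \<Rightarrow> 'a"
  assumes "permutation \<sigma>" and "0 < l" "0 < n"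
  shows "n * count (BU l (cycle_type \<sigma>)) n = l * card {x. l * card (cyc \<sigma> x) = n}"
proof (cases "l dvd n")
  case True
  then obtain k where k: "n = l * k" by blast
  with assms have "0 < k" by simp
  have "{x. l * card (cyc \<sigma> x) = n} = {x. card (cyc \<sigma> x) = k}"
    using k assms(2) by auto
  then show ?thesis
    using k assms(2) count_cycle_type[OF assms(1) \<open>0 < k\<close>] by (simp add: count_BU)
next
  case False
  then have "{x. l * card (cyc \<sigma> x) = n} = {}" by auto
  then show ?thesis using False assms(2) by (simp add: count_BU)
qed

lemma sum_UNIV_partition:
  fixes h :: "'a::finite \<Rightarrow> 'b::comm_monoid_add"
  assumes "finite S" and "\<forall>u. \<exists>!s. s \<in> S \<and> u \<in> C s"
  shows "sum h UNIV = (\<Sum>s\<in>S. sum h (C s))"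
proof -
  have "UNIV = (\<Union>s\<in>S. C s)" using assms(2) by blast
  moreover have "\<forall>s\<in>S. \<forall>t\<in>S. s \<noteq> t \<longrightarrow> C s \<inter> C t = {}" using assms(2) by blast
  ultimately show ?thesis
    using sum.UNION_disjoint[OF assms(1), of C h] by simp
qed

lemma card_Collect_prod_eq_sum_fibres:
  "card {z :: 'a::finite \<times> 'b::finite. P z} = (\<Sum>v\<in>UNIV. card {x. P (x, v)})"
proof -
  have "{z. P z} = (\<Union>v. (\<lambda>x. (x, v)) ` {x. P (x, v)})" by auto
  also have "card \<dots> = (\<Sum>v\<in>UNIV. card ((\<lambda>x. (x, v)) ` {x. P (x, v)}))"
    by (rule card_UN_disjoint) auto
  finally show ?thesis
    by (simp add: card_image inj_on_def)
qed

definition skew_product :: "('u \<Rightarrow> 'u) \<Rightarrow> ('u \<Rightarrow> 'w \<Rightarrow> 'w) \<Rightarrow> 'w \<times> 'u \<Rightarrow> 'w \<times> 'u" where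
  "skew_product g \<phi> = (\<lambda>(x, u). (\<phi> u x, g u))"

fun cocycle :: "('u \<Rightarrow> 'u) \<Rightarrow> ('u \<Rightarrow> 'w \<Rightarrow> 'w) \<Rightarrow> 'u \<Rightarrow> nat \<Rightarrow> 'w \<Rightarrow> 'w" where
  "cocycle g \<phi> u 0 = id"
| "cocycle g \<phi> u (Suc n) = \<phi> ((g ^^ n) u) \<circ> cocycle g \<phi> u n"

lemma funpow_skew_product:
  "(skew_product g \<phi> ^^ n) (x, u) = (cocycle g \<phi> u n x, (g ^^ n) u)"
  by (induction n) (simp_all add: skew_product_def)

lemma cocycle_add:
  "cocycle g \<phi> u (m + n) = cocycle g \<phi> ((g ^^ m) u) n \<circ> cocycle g \<phi> u m"
proof (induction n)
  case (Suc n)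
  have "(g ^^ (m + n)) u = (g ^^ n) ((g ^^ m) u)"
    by (simp add: funpow_add add.commute[of m n])
  then show ?case using Suc by (simp add: o_assoc)
qed simp

lemma cocycle_mult:
  assumes "(g ^^ l) u = u"
  shows "cocycle g \<phi> u (l * q) = cocycle g \<phi> u l ^^ q"
proof (induction q)
  case (Suc q)
  have "cocycle g \<phi> u (l * Suc q) = cocycle g \<phi> u (l * q) \<circ> cocycle g \<phi> u l"
    using cocycle_add[of g \<phi> u l "l * q"] assms by simp
  then show ?case by (simp only: Suc funpow_Suc_right)
qed simp

lemma bij_cocycle: "(\<And>u. bij (\<phi> u)) \<Longrightarrow> bij (cocycle g \<phi> u n)"
  by (induction n) (simp_all add: bij_comp)

lemma bij_skew_product:
  assumes "bij g" and "\<And>u. bij (\<phi> u)"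
  shows "bij (skew_product g \<phi>)"
proof (rule bij_betw_byWitness)
  show "\<forall>z\<in>UNIV. (\<lambda>(y, v). (inv (\<phi> (inv g v)) y, inv g v)) (skew_product g \<phi> z) = z"
    using assms by (auto simp: skew_product_def bij_is_inj)
  show "\<forall>z\<in>UNIV. skew_product g \<phi> ((\<lambda>(y, v). (inv (\<phi> (inv g v)) y, inv g v)) z) = z"
    using assms by (auto simp: skew_product_def bij_is_surj surj_f_inv_f)
qed auto

lemma least_power_skew_product:
  fixes g :: "'u::finite \<Rightarrow> 'u" and \<phi> :: "'u \<Rightarrow> 'w::finite \<Rightarrow> 'w"
  assumes "bij g" and "\<And>u. bij (\<phi> u)"
  shows "least_power (skew_product g \<phi>) (x, u)
           = least_power g u * least_power (cocycle g \<phi> u (least_power g u)) x"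
proof (rule least_power_eqI)
  show "permutation (skew_product g \<phi>)"
    using assms by (intro bij_imp_permutation bij_skew_product)
  have perm_g: "permutation g" and perm_R: "permutation (cocycle g \<phi> u k)" for k
    using assms by (simp_all add: bij_imp_permutation bij_cocycle)
  fix n
  define l R where "l = least_power g u" and "R = cocycle g \<phi> u l"
  have "(skew_product g \<phi> ^^ n) (x, u) = (x, u) \<longleftrightarrow> (g ^^ n) u = u \<and> cocycle g \<phi> u n x = x"
    by (auto simp: funpow_skew_product)
  also have "\<dots> \<longleftrightarrow> (\<exists>q. n = l * q \<and> (R ^^ q) x = x)"
  proof -
    have "(g ^^ n) u = u \<longleftrightarrow> l dvd n"
      using least_power_dvd[OF perm_g] by (simp add: l_def)
    moreover have "cocycle g \<phi> u (l * q) = R ^^ q" for q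
      using cocycle_mult[OF least_power_of_permutation(1)[OF perm_g]] by (simp add: R_def l_def)
    ultimately show ?thesis by (auto elim!: dvdE)
  qed
  also have "\<dots> \<longleftrightarrow> (\<exists>q. n = l * q \<and> least_power R x dvd q)"
    using least_power_dvd[OF perm_R] by (simp add: R_def)
  also have "\<dots> \<longleftrightarrow> l * least_power R x dvd n"
    by (metis dvd_def mult.assoc mult_dvd_mono dvd_refl)
  finally show "(skew_product g \<phi> ^^ n) (x, u) = (x, u) \<longleftrightarrow> l * least_power R x dvd n" .
qed

lemma card_cyc_skew_product:
  fixes g :: "'u::finite \<Rightarrow> 'u" and \<phi> :: "'u \<Rightarrow> 'w::finite \<Rightarrow> 'w"
  assumes "bij g" and "\<And>u. bij (\<phi> u)"
  shows "card (cyc (skew_product g \<phi>) (x, u))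
           = card (cyc g u) * card (cyc (cocycle g \<phi> u (card (cyc g u))) x)"
  using assms least_power_skew_product[where g = g and \<phi> = \<phi>, OF assms]
  by (simp add: card_cyc bij_imp_permutation bij_skew_product bij_cocycle)

lemma card_fibre_step:
  fixes \<phi> :: "'u \<Rightarrow> 'w::finite \<Rightarrow> 'w"
  assumes "bij (\<phi> u)" and "\<And>z. P (skew_product g \<phi> z) = P z"
  shows "card {x. P (x, g u)} = card {x. P (x, u)}"
proof -
  have step: "P (\<phi> u x, g u) = P (x, u)" for x
    using assms(2)[of "(x, u)"] by (simp add: skew_product_def)
  have "{x. P (x, g u)} = \<phi> u ` {x. P (x, u)}"
  proof (intro equalityI subsetI)
    fix y assume "y \<in> {x. P (x, g u)}"
    moreover obtain x where "y = \<phi> u x" using assms(1) by (metis bij_pointE)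
    ultimately show "y \<in> \<phi> u ` {x. P (x, u)}" using step by auto
  qed (use step in auto)
  then show ?thesis
    by (metis assms(1) bij_is_inj card_image inj_on_subset subset_UNIV)
qed

lemma card_fibre_cyc:
  fixes \<phi> :: "'u \<Rightarrow> 'w::finite \<Rightarrow> 'w"
  assumes "\<And>u. bij (\<phi> u)" and "\<And>z. P (skew_product g \<phi> z) = P z" and "v \<in> cyc g u"
  shows "card {x. P (x, v)} = card {x. P (x, u)}"
proof -
  obtain n where "v = (g ^^ n) u" using assms(3) by (auto simp: cyc_def)
  moreover have "card {x. P (x, (g ^^ n) u)} = card {x. P (x, u)}"
    by (induction n) (simp_all add: card_fibre_step[where P = P, OF assms(1,2)])
  ultimately show ?thesis by simp
qed

theorem cycle_type_skew_product:
  fixes g :: "'u::finite \<Rightarrow> 'u" and \<phi> :: "'u \<Rightarrow> 'w::finite \<Rightarrow> 'w"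
  assumes "bij g" and "\<And>u. bij (\<phi> u)" and "\<forall>u. \<exists>!s. s \<in> S \<and> u \<in> cyc g s"
  shows "cycle_type (skew_product g \<phi>)
           = (\<Sum>s\<in>S. BU (card (cyc g s)) (cycle_type (cocycle g \<phi> s (card (cyc g s)))))"
proof -
  define F l R where "F = skew_product g \<phi>" and "l s = card (cyc g s)"
    and "R s = cocycle g \<phi> s (l s)" for s
  have perm_F: "permutation F" and perm_R: "permutation (R s)" for s
    using assms by (simp_all add: F_def R_def bij_imp_permutation bij_skew_product bij_cocycle)
  have "cycle_type F = (\<Sum>s\<in>S. BU (l s) (cycle_type (R s)))"
  proof (rule cycle_type_eqI[OF perm_F])
    show "count (\<Sum>s\<in>S. BU (l s) (cycle_type (R s))) 0 = 0"
      by (simp add: count_sum count_BU l_def card_cyc_pos count_cycle_type_0)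
    fix m :: nat assume "0 < m"
    define c where "c u = card {x. card (cyc F (x, u)) = m}" for u
    have invariant: "card (cyc F (F z)) = m \<longleftrightarrow> card (cyc F z) = m" for z
      using cyc_eq_if_mem[OF perm_F funpow_in_cyc[of 1]] by simp
    have "m * count (\<Sum>s\<in>S. BU (l s) (cycle_type (R s))) m
            = (\<Sum>s\<in>S. l s * card {x. l s * card (cyc (R s) x) = m})"
      by (simp add: count_sum sum_distrib_left count_BU_cycle_type perm_R l_def card_cyc_pos
          \<open>0 < m\<close>)
    also have "\<dots> = (\<Sum>s\<in>S. l s * c s)"
      by (simp add: c_def l_def R_def F_def
          card_cyc_skew_product[where g = g and \<phi> = \<phi>, OF assms(1,2)])
    also have "\<dots> = (\<Sum>s\<in>S. \<Sum>u\<in>cyc g s. c u)"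
      using card_fibre_cyc[where P = "\<lambda>z. card (cyc (skew_product g \<phi>) z) = m",
          OF assms(2) invariant[unfolded F_def]]
      by (simp add: c_def l_def F_def)
    also have "\<dots> = (\<Sum>u\<in>UNIV. c u)"
      by (rule sum_UNIV_partition[symmetric]) (simp_all add: assms(3))
    also have "\<dots> = card {z. card (cyc F z) = m}"
      by (simp add: c_def card_Collect_prod_eq_sum_fibres)
    finally show "m * count (\<Sum>s\<in>S. BU (l s) (cycle_type (R s))) m = card {z. card (cyc F z) = m}" .
  qed
  then show ?thesis by (simp add: F_def l_def R_def)
qed

lemma inj_vector_matrix_mult:
  fixes A :: "'a::field^'n^'n"
  assumes "invertible A"
  shows "inj (\<lambda>x. x v* A)"
proof (rule injI)
  fix x y assume eq: "x v* A = y v* A"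
  obtain B where B: "A ** B = mat 1" using assms unfolding invertible_def by blast
  have "x = (x v* A) v* B" by (simp add: vector_matrix_mul_assoc B)
  also have "\<dots> = y" by (simp add: eq vector_matrix_mul_assoc B)
  finally show "x = y" .
qed

lemma bij_affine:
  fixes M :: "'a::{field,finite}^'d^'d"
  assumes "invertible M"
  shows "bij (\<lambda>x. x v* M + c)"
  using inj_vector_matrix_mult[OF assms] by (simp add: bij_def finite_UNIV_inj_surj inj_def)

lemma inj_vector_matrix_mult_plus_id:
  fixes M :: "'a::field^'d^'d"
  assumes "M \<in> CGL"
  shows "inj (\<lambda>x. x v* M + x)"
proof (rule injI)
  fix x y assume "x v* M + x = y v* M + y"
  then have "(x - y) v* M = - (x - y)"
    by (simp add: vector_matrix_mult_diff_distrib algebra_simps)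
  then have "x - y = 0" using assms unfolding CGL_def by blast
  then show "x = y" by simp
qed

lemma complete_mapping_skew_affine:
  fixes g :: "'u::{finite,ab_group_add} \<Rightarrow> 'u" and M :: "'u \<Rightarrow> 'a::{field,finite}^'d^'d"
  assumes "complete_mapping g" and "\<And>u. M u \<in> CGL"
  shows "complete_mapping (skew_product g (\<lambda>u x. x v* M u + c u))"
  unfolding complete_mapping_def
proof
  show "bij (skew_product g (\<lambda>u x. x v* M u + c u))"
    using assms by (intro bij_skew_product bij_affine) (auto simp: complete_mapping_def CGL_def)
  have "inj (\<lambda>z. skew_product g (\<lambda>u x. x v* M u + c u) z + z)"
  proof (rule injI)
    fix z z' assume eq: "skew_product g (\<lambda>u x. x v* M u + c u) z + z
                        = skew_product g (\<lambda>u x. x v* M u + c u) z' + z'"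
    obtain x u x' u' where z: "z = (x, u)" "z' = (x', u')" by fastforce
    have "g u + u = g u' + u'" using eq by (simp add: z skew_product_def)
    then have "u = u'"
      using assms(1) unfolding complete_mapping_def by (auto dest: bij_is_inj injD)
    then have "x v* M u + x = x' v* M u + x'" using eq by (simp add: z skew_product_def)
    then have "x = x'" using inj_vector_matrix_mult_plus_id[OF assms(2)] by (auto dest: injD)
    then show "z = z'" using z \<open>u = u'\<close> by simp
  qed
  then show "bij (\<lambda>z. skew_product g (\<lambda>u x. x v* M u + c u) z + z)"
    by (simp add: bij_def finite_UNIV_inj_surj)
qed

lemma mat_chain_Suc_right:
  "mat_chain g M s (Suc n) = mat_chain g M s n ** M ((g ^^ n) s)"
proof (induction n arbitrary: s)
  case (Suc n)
  then show ?case by (simp add: matrix_mul_assoc funpow_swap1)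
qed simp

lemma funpow_notin_transversal:
  assumes "\<forall>u. \<exists>!s. s \<in> S \<and> u \<in> cyc g s" and "s \<in> S" and "0 < n" "n < least_power g s"
  shows "(g ^^ n) s \<notin> S"
proof
  assume "(g ^^ n) s \<in> S"
  then have "(g ^^ n) s = s"
    using assms(1,2) self_in_cyc funpow_in_cyc by metis
  then show False
    using least_power_le[where f = g and n = n and x = s] assms(3,4) by simp
qed

lemma cocycle_skew_affine:
  fixes M :: "'u \<Rightarrow> 'a::comm_ring_1^'d^'d"
  assumes "permutation g" and "\<forall>u. \<exists>!s. s \<in> S \<and> u \<in> cyc g s" and "s \<in> S"
    and "n \<le> least_power g s"
  shows "cocycle g (\<lambda>u x. x v* M u + (if g u \<in> S then w (g u) else 0)) s n x
           = x v* mat_chain g M s n + (if n = least_power g s then w s else 0)"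
  using assms(4)
proof (induction n)
  case 0
  then show ?case using least_power_of_permutation(2)[OF assms(1), of s] by simp
next
  case (Suc n)
  then have IH: "cocycle g (\<lambda>u x. x v* M u + (if g u \<in> S then w (g u) else 0)) s n x
                   = x v* mat_chain g M s n"
    by simp
  show ?case
  proof (cases "Suc n = least_power g s")
    case True
    then have "(g ^^ Suc n) s = s"
      using least_power_of_permutation(1)[OF assms(1), of s] by simp
    then show ?thesis
      using IH True[symmetric] assms(3)
      by (simp add: mat_chain_Suc_right vector_matrix_mul_assoc del: mat_chain.simps)
  next
    case False
    then have "(g ^^ Suc n) s \<notin> S"
      using funpow_notin_transversal[OF assms(2,3), of "Suc n"] Suc.prems by simp
    then show ?thesis
      using IH False
      by (simp add: mat_chain_Suc_right vector_matrix_mul_assoc del: mat_chain.simps)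
  qed
qed

theorem theorem4p5:
  fixes p :: nat
    and g :: "'a::{field,finite}^'t \<Rightarrow> 'a^'t"
    and S :: "('a^'t) set"
    and M :: "'a^'t \<Rightarrow> 'a^'d^'d"
    and w :: "'a^'t \<Rightarrow> 'a^'d"
    and f :: "('a^'d) \<times> ('a^'t) \<Rightarrow> ('a^'d) \<times> ('a^'t)"
  assumes "prime p" and "CARD('a) = p"
    and "complete_mapping g"
    and "\<forall>u. \<exists>!s. s \<in> S \<and> u \<in> cyc g s"
    and "\<forall>u. M u \<in> CGL"
    and "\<forall>x u. f (x, u) =
           (let \<omega> = (if g u \<in> S then w (g u) else 0);
                \<nu> = g u - u
            in (x v* M u + \<omega>, u + \<nu>))"
  shows "complete_mapping f \<and>
         cycle_type f =
           (\<Sum>s\<in>S. BU (card (cyc g s))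
                      (cycle_type (aff_map (mat_chain g M s (card (cyc g s))) (w s))))"
proof -
  define \<phi> where "\<phi> = (\<lambda>u x. x v* M u + (if g u \<in> S then w (g u) else 0))"
  have f_eq: "f = skew_product g \<phi>"
    using assms(6) by (auto simp: fun_eq_iff skew_product_def \<phi>_def Let_def)
  have bij_g: "bij g" and perm_g: "permutation g"
    using assms(3) by (simp_all add: complete_mapping_def permutation)
  have bij_\<phi>: "bij (\<phi> u)" for u
    unfolding \<phi>_def by (rule bij_affine) (use assms(5) in \<open>simp add: CGL_def\<close>)
  have "cocycle g \<phi> s (card (cyc g s)) = aff_map (mat_chain g M s (card (cyc g s))) (w s)"
    if "s \<in> S" for s
    using cocycle_skew_affine[OF perm_g assms(4) that order_refl, where M = M and w = w]
    by (simp add: fun_eq_iff aff_map_def card_cyc[OF perm_g] \<phi>_def)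
  then have "cycle_type f = (\<Sum>s\<in>S. BU (card (cyc g s))
                      (cycle_type (aff_map (mat_chain g M s (card (cyc g s))) (w s))))"
    using cycle_type_skew_product[OF bij_g bij_\<phi> assms(4)] f_eq by simp
  moreover have "complete_mapping f"
    unfolding f_eq \<phi>_def
    by (rule complete_mapping_skew_affine[OF assms(3)]) (use assms(5) in blast)
  ultimately show ?thesis by simp
qed

end
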